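(* Let $\varepsilon\in\{-1,1\}$, let $M(\phi,\xi,\eta,g_M)$ be a Lorentzian almost (para)contact manifold of dimension $2m+1$, let $(N,g_N)$ be a semi-Riemannian manifold of dimension $n$, and let $F:M\to N$ be an anti-invariant semi-Riemannian submersion. Then: (a) if $\xi$ is vertical, then $m\le n\le 2m$; (b) if $m=n$, then $\xi$ is vertical; (c) if $\xi$ is horizontal, then $m+1\le n$.
   Context: A Lorentzian almost contact ($\varepsilon=-1$), resp. almost paracontact ($\varepsilon=1$), manifold is a $(2m+1)$-dimensional manifold $M$ with Lorentzian metric $g_M$, $(1,1)$-tensor $\phi$, vector field $\xi$ (characteristic vector field) and $1$-form $\eta$ with $\phi^2X=\varepsilon X+\eta(X)\xi$, $g_M(\phi X,\phi Y)=g_M(X,Y)+\eta(X)\eta(Y)$, $\eta(X)=\varepsilon g_M(X,\xi)$, $\eta(\xi)=-\varepsilon$. A semi-Riemannian submersion $F:M\to N$ is a submersion with nondegenerate fibres such that $F_*$ is an isometry from $(\ker F_* )^\perp$ onto $TN$; it is anti-invariant if $\phi(\ker F_* )\subseteq(\ker F_* )^\perp$. $\xi$ is vertical if it takes values in $\ker F_*$, horizontal if in $(\ker F_* )^\perp$. *)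

theory Defs
  imports "HOL-Analysis.Analysis"
begin

text \<open>Pointwise (tangent-space) model. Tangent spaces of M are modelled by a
  finite-dimensional real vector space 'v, those of N by 'w; all tensor fields are
  families indexed by points p of M.\<close>

definition sym_bilinear :: "('a::real_vector \<Rightarrow> 'a \<Rightarrow> real) \<Rightarrow> bool" where
  "sym_bilinear g \<longleftrightarrow> bilinear g \<and> (\<forall>x y. g x y = g y x)"

definition orth_compl :: "('a \<Rightarrow> 'a \<Rightarrow> real) \<Rightarrow> 'a set \<Rightarrow> 'a set" where
  "orth_compl g S = {x. \<forall>y\<in>S. g x y = 0}"

definition nondegenerate_on :: "('a \<Rightarrow> 'a \<Rightarrow> real) \<Rightarrow> 'a::real_vector set \<Rightarrow> bool" where
  "nondegenerate_on g S \<longleftrightarrow> (\<forall>x\<in>S. (\<forall>y\<in>S. g x y = 0) \<longrightarrow> x = 0)"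

definition semi_riemannian_form :: "('a::real_vector \<Rightarrow> 'a \<Rightarrow> real) \<Rightarrow> bool" where
  "semi_riemannian_form g \<longleftrightarrow> sym_bilinear g \<and> nondegenerate_on g UNIV"

definition lorentzian_form :: "('a::euclidean_space \<Rightarrow> 'a \<Rightarrow> real) \<Rightarrow> bool" where
  "lorentzian_form g \<longleftrightarrow> semi_riemannian_form g \<and>
     (\<exists>x. g x x < 0) \<and>
     (\<forall>U. subspace U \<and> (\<forall>x\<in>U. x \<noteq> 0 \<longrightarrow> g x x < 0) \<longrightarrow> dim U \<le> 1)"

text \<open>Lorentzian almost contact (eps = -1) / almost paracontact (eps = 1) structure
  at a single tangent space.\<close>
definition lorentzian_almost_paracontact ::
  "real \<Rightarrow> ('a::euclidean_space \<Rightarrow> 'a) \<Rightarrow> 'a \<Rightarrow> ('a \<Rightarrow> real) \<Rightarrow> ('a \<Rightarrow> 'a \<Rightarrow> real) \<Rightarrow> bool" where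
  "lorentzian_almost_paracontact eps phi xi eta g \<longleftrightarrow>
     lorentzian_form g \<and> linear phi \<and> linear eta \<and>
     (\<forall>X. phi (phi X) = eps *\<^sub>R X + eta X *\<^sub>R xi) \<and>
     (\<forall>X Y. g (phi X) (phi Y) = g X Y + eta X * eta Y) \<and>
     (\<forall>X. eta X = eps * g X xi) \<and>
     eta xi = - eps"

definition semi_riem_submersion_at ::
  "('a::euclidean_space \<Rightarrow> 'a \<Rightarrow> real) \<Rightarrow> ('b::euclidean_space \<Rightarrow> 'b \<Rightarrow> real) \<Rightarrow> ('a \<Rightarrow> 'b) \<Rightarrow> bool" where
  "semi_riem_submersion_at gM gN dF \<longleftrightarrow>
     linear dF \<and> surj dF \<and>
     nondegenerate_on gM {v. dF v = 0} \<and>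
     bij_betw dF (orth_compl gM {v. dF v = 0}) UNIV \<and>
     (\<forall>x\<in>orth_compl gM {v. dF v = 0}. \<forall>y\<in>orth_compl gM {v. dF v = 0}.
        gN (dF x) (dF y) = gM x y)"

definition anti_invariant_at :: "('a \<Rightarrow> 'a \<Rightarrow> real) \<Rightarrow> ('a \<Rightarrow> 'a) \<Rightarrow> ('a \<Rightarrow> 'b::zero) \<Rightarrow> bool" where
  "anti_invariant_at gM phi dF \<longleftrightarrow>
     phi ` {v. dF v = 0} \<subseteq> orth_compl gM {v. dF v = 0}"

end

theory Submission
  imports Defs
begin

text \<open>Write \<open>V = ker dF\<close> and \<open>H\<close> for its orthogonal complement. Since \<open>dF\<close> maps \<open>H\<close>
  isomorphically onto \<open>T N\<close>, every subspace of \<open>H\<close> has dimension at most \<open>n\<close>, while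
  \<open>V + H\<close> is everything, so \<open>2m + 1 \<le> dim V + n\<close>. From \<open>\<phi>\<^sup>2 = \<epsilon> + \<eta> \<otimes> \<xi>\<close> the kernel of
  \<open>\<phi>\<close> is spanned by \<open>\<xi>\<close>, so \<open>\<phi>\<close> embeds every subspace of \<open>V\<close> avoiding \<open>\<xi>\<close> into \<open>H\<close>.
  If \<open>\<xi> \<notin> V\<close> this applies to \<open>V\<close> itself, giving \<open>2m + 1 \<le> 2n\<close>; if \<open>\<xi> \<in> V\<close> it applies to
  the hyperplane \<open>V \<inter> \<xi>\<^sup>\<bottom>\<close> of \<open>V\<close>, giving \<open>2m \<le> 2n\<close>, and \<open>n < 2m + 1\<close> because the
  kernel is nontrivial. A horizontal \<open>\<xi>\<close> is not vertical, as \<open>V \<inter> H = 0\<close>.\<close>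

lemma dim_le_add_if_subset_sums:
  fixes S T U :: "'a::euclidean_space set"
  assumes "subspace S" "subspace T" "U \<subseteq> {x + y |x y. x \<in> S \<and> y \<in> T}"
  shows "dim U \<le> dim S + dim T"
  using dim_subset[OF assms(3)] dim_sums_Int[OF assms(1,2)] by linarith

lemma dim_le_DIM_if_inj_on:
  fixes f :: "'a::euclidean_space \<Rightarrow> 'b::euclidean_space"
  assumes "linear f" "inj_on f S" "subspace S"
  shows "dim S \<le> DIM('b)"
proof -
  have "dim (f ` S) = dim S"
    using assms by (intro dim_image_eq) (auto simp: span_eq_iff[THEN iffD2])
  then show ?thesis
    using dim_subset_UNIV[of "f ` S"] by simp
qed

lemma subspace_orth_compl: "bilinear g \<Longrightarrow> subspace (orth_compl g S)"
  by (auto simp: orth_compl_def subspace_def bilinear_lzero bilinear_ladd bilinear_lmul)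

context
  fixes gM :: "'v::euclidean_space \<Rightarrow> 'v \<Rightarrow> real"
    and gN :: "'w::euclidean_space \<Rightarrow> 'w \<Rightarrow> real" and dF :: "'v \<Rightarrow> 'w"
  assumes bilinear: "bilinear gM"
    and submersion: "semi_riem_submersion_at gM gN dF"
begin

private abbreviation "vertical \<equiv> {v. dF v = 0}"
private abbreviation "horizontal \<equiv> orth_compl gM vertical"

lemma submersion_linear: "linear dF"
  using submersion by (simp add: semi_riem_submersion_at_def)

lemma submersion_inj_on_horizontal: "inj_on dF horizontal"
  and submersion_image_horizontal: "dF ` horizontal = UNIV"
  using submersion by (auto simp: semi_riem_submersion_at_def bij_betw_def)

lemma submersion_horizontal_vertical_eq_0:
  assumes "x \<in> orth_compl gM {v. dF v = 0}" "dF x = 0"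
  shows "x = 0"
proof -
  have "0 \<in> horizontal"
    using subspace_0[OF subspace_orth_compl[OF bilinear]] .
  then show ?thesis
    using inj_onD[OF submersion_inj_on_horizontal, of x 0] assms linear_0[OF submersion_linear]
    by simp
qed

lemma submersion_dim_horizontal_le:
  "subspace S \<Longrightarrow> S \<subseteq> orth_compl gM {v. dF v = 0} \<Longrightarrow> dim S \<le> DIM('w)"
  using dim_le_DIM_if_inj_on[OF submersion_linear] inj_on_subset[OF submersion_inj_on_horizontal] by blast

lemma submersion_DIM_le: "DIM('v) \<le> dim {v. dF v = 0} + DIM('w)"
proof -
  have "UNIV \<subseteq> {x + y |x y. x \<in> vertical \<and> y \<in> horizontal}"
  proof
    fix v :: 'v
    obtain h where "h \<in> horizontal" "dF h = dF v"
      using submersion_image_horizontal by (metis UNIV_I imageE)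
    then show "v \<in> {x + y |x y. x \<in> vertical \<and> y \<in> horizontal}"
      by (intro CollectI exI[of _ "v - h"] exI[of _ h]) (simp add: linear_diff[OF submersion_linear])
  qed
  then have "DIM('v) \<le> dim vertical + dim horizontal"
    using dim_le_add_if_subset_sums[OF linear_subspace_kernel[OF submersion_linear]
        subspace_orth_compl[OF bilinear], where U = UNIV] by (simp add: dim_UNIV)
  then show ?thesis
    using submersion_dim_horizontal_le[OF subspace_orth_compl[OF bilinear] order_refl] by linarith
qed

lemma submersion_DIM_less:
  assumes "dF x = 0" "x \<noteq> 0"
  shows "DIM('w) < DIM('v)"
proof -
  have "x \<notin> horizontal"
    using assms submersion_horizontal_vertical_eq_0 by blast
  then have "dim horizontal < DIM('v)"
    using dim_eq_full[of horizontal] dim_subset_UNIV[of horizontal]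
    by (simp add: span_eq_iff[THEN iffD2, OF subspace_orth_compl[OF bilinear]])
      (metis UNIV_I order_less_le)
  moreover have "DIM('w) \<le> dim horizontal"
    using dim_image_le[OF submersion_linear, of horizontal] by (simp add: submersion_image_horizontal dim_UNIV)
  ultimately show ?thesis by linarith
qed

end

context
  fixes eps :: real and phi :: "'v::euclidean_space \<Rightarrow> 'v" and xi :: 'v
    and eta :: "'v \<Rightarrow> real" and g :: "'v \<Rightarrow> 'v \<Rightarrow> real"
  assumes eps: "eps \<noteq> 0"
    and paracontact: "lorentzian_almost_paracontact eps phi xi eta g"
begin

lemma paracontact_bilinear: "bilinear g"
  using paracontact
  by (simp add: lorentzian_almost_paracontact_def lorentzian_form_def
      semi_riemannian_form_def sym_bilinear_def)

lemma paracontact_linear_phi: "linear phi"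
  using paracontact by (simp add: lorentzian_almost_paracontact_def)

lemma paracontact_xi_xi: "g xi xi = -1"
proof -
  have "eps * g xi xi = eps * -1"
    using paracontact unfolding lorentzian_almost_paracontact_def by (metis mult_minus1_right)
  then show ?thesis
    using eps mult_cancel_left[of eps "g xi xi" "-1"] by simp
qed

lemma paracontact_xi_nonzero: "xi \<noteq> 0"
  using paracontact_xi_xi bilinear_lzero[OF paracontact_bilinear] by force

lemma paracontact_phi_eq_0:
  assumes "phi x = 0"
  shows "x \<in> span {xi}"
proof -
  have "eps *\<^sub>R x + eta x *\<^sub>R xi = 0"
    using paracontact assms linear_0 by (metis lorentzian_almost_paracontact_def)
  then have "eps *\<^sub>R x = (- eta x) *\<^sub>R xi"
    by (simp add: eq_neg_iff_add_eq_0)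
  then have "x = (inverse eps * - eta x) *\<^sub>R xi"
    using eps by (metis scaleR_scaleR scaleR_one left_inverse)
  then show ?thesis
    by (metis span_base span_mul singletonI)
qed

lemma paracontact_inj_on_phi:
  assumes "subspace S" "xi \<notin> S"
  shows "inj_on phi S"
proof (rule linear_inj_on_iff_eq_0[THEN iffD2, OF paracontact_linear_phi assms(1)])
  show "\<forall>x\<in>S. phi x = 0 \<longrightarrow> x = 0"
  proof (intro ballI impI)
    fix x assume "x \<in> S" "phi x = 0"
    then obtain c where "x = c *\<^sub>R xi"
      using paracontact_phi_eq_0 span_singleton by blast
    then show "x = 0"
      using \<open>x \<in> S\<close> assms(2) subspace_scale[OF assms(1) \<open>x \<in> S\<close>, of "inverse c"] by (cases "c = 0") auto
  qed
qed

end

locale anti_invariant_submersion =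
  fixes eps :: real and phi :: "'v::euclidean_space \<Rightarrow> 'v" and xi :: 'v
    and eta :: "'v \<Rightarrow> real" and gM :: "'v \<Rightarrow> 'v \<Rightarrow> real"
    and gN :: "'w::euclidean_space \<Rightarrow> 'w \<Rightarrow> real" and dF :: "'v \<Rightarrow> 'w"
  assumes eps: "eps \<noteq> 0"
    and paracontact: "lorentzian_almost_paracontact eps phi xi eta gM"
    and submersion: "semi_riem_submersion_at gM gN dF"
    and anti_invariant: "anti_invariant_at gM phi dF"
begin

abbreviation "vertical \<equiv> {v. dF v = 0}"

lemmas bilinear_gM = paracontact_bilinear[OF eps paracontact]

lemma dim_vertical_subspace_le:
  assumes "subspace S" "S \<subseteq> vertical" "xi \<notin> S"
  shows "dim S \<le> DIM('w)"
proof -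
  note linear_phi = paracontact_linear_phi[OF eps paracontact]
  have "dim (phi ` S) = dim S"
    using paracontact_inj_on_phi[OF eps paracontact assms(1,3)] assms(1)
    by (intro dim_image_eq[OF linear_phi]) (simp add: span_eq_iff[THEN iffD2])
  moreover have "dim (phi ` S) \<le> DIM('w)"
    using anti_invariant assms(2)
    by (intro submersion_dim_horizontal_le[OF bilinear_gM submersion] linear_subspace_image[OF linear_phi assms(1)])
      (auto simp: anti_invariant_at_def)
  ultimately show ?thesis by simp
qed

lemma DIM_le_if_xi_not_vertical:
  assumes "dF xi \<noteq> 0"
  shows "DIM('v) \<le> 2 * DIM('w)"
  using dim_vertical_subspace_le[OF linear_subspace_kernel[OF submersion_linear[OF bilinear_gM submersion]]]
    submersion_DIM_le[OF bilinear_gM submersion] assms by simp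

lemma DIM_bounds_if_xi_vertical:
  assumes "dF xi = 0"
  shows "DIM('v) \<le> 2 * DIM('w) + 1" "DIM('w) < DIM('v)"
proof -
  have linear_dF: "linear dF"
    using submersion_linear[OF bilinear_gM submersion] .
  define W where "W = vertical \<inter> orth_compl gM {xi}"
  have "subspace W"
    unfolding W_def
    by (intro subspace_inter linear_subspace_kernel[OF linear_dF] subspace_orth_compl[OF bilinear_gM])
  moreover have "xi \<notin> W"
    using paracontact_xi_xi[OF eps paracontact] by (simp add: W_def orth_compl_def)
  ultimately have dim_W: "dim W \<le> DIM('w)"
    by (intro dim_vertical_subspace_le) (auto simp: W_def)
  have vertical_sums: "vertical \<subseteq> {x + y |x y. x \<in> W \<and> y \<in> span {xi}}"
  proof
    fix x assume "x \<in> vertical"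
    \<comment> \<open>project along \<open>\<xi>\<close>, using \<open>g(\<xi>, \<xi>) = -1\<close>\<close>
    have "x + gM x xi *\<^sub>R xi \<in> W"
      using \<open>x \<in> vertical\<close> assms paracontact_xi_xi[OF eps paracontact] bilinear_gM
      by (simp add: W_def orth_compl_def linear_add[OF linear_dF] linear_scale[OF linear_dF]
          bilinear_ladd bilinear_lmul)
    moreover have "(- gM x xi) *\<^sub>R xi \<in> span {xi}"
      by (intro span_mul span_base) simp
    ultimately show "x \<in> {x + y |x y. x \<in> W \<and> y \<in> span {xi}}"
      by (intro CollectI exI[of _ "x + gM x xi *\<^sub>R xi"] exI[of _ "(- gM x xi) *\<^sub>R xi"]) auto
  qed
  have "dim vertical \<le> dim W + 1"
    using dim_le_add_if_subset_sums[OF \<open>subspace W\<close> subspace_span vertical_sums]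
      paracontact_xi_nonzero[OF eps paracontact] by (simp add: dim_singleton)
  then show "DIM('v) \<le> 2 * DIM('w) + 1"
    using submersion_DIM_le[OF bilinear_gM submersion] dim_W by linarith
  show "DIM('w) < DIM('v)"
    using submersion_DIM_less[OF bilinear_gM submersion assms
        paracontact_xi_nonzero[OF eps paracontact]] .
qed

lemma xi_horizontal_not_vertical: "xi \<in> orth_compl gM vertical \<Longrightarrow> dF xi \<noteq> 0"
  using submersion_horizontal_vertical_eq_0[OF bilinear_gM submersion]
    paracontact_xi_nonzero[OF eps paracontact] by blast

end

theorem mainTheorem3:
  fixes eps :: real and m n :: nat
    and phi :: "'p \<Rightarrow> 'v::euclidean_space \<Rightarrow> 'v" and xi :: "'p \<Rightarrow> 'v"
    and eta :: "'p \<Rightarrow> 'v \<Rightarrow> real" and gM :: "'p \<Rightarrow> 'v \<Rightarrow> 'v \<Rightarrow> real"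
    and gN :: "'p \<Rightarrow> 'w::euclidean_space \<Rightarrow> 'w \<Rightarrow> real"
    and dF :: "'p \<Rightarrow> 'v \<Rightarrow> 'w"
  assumes eps: "eps = -1 \<or> eps = 1"
    and dimM: "DIM('v) = 2 * m + 1"
    and dimN: "DIM('w) = n"
    and struct: "\<And>p. lorentzian_almost_paracontact eps (phi p) (xi p) (eta p) (gM p)"
    and gN: "\<And>p. semi_riemannian_form (gN p)"
    and subm: "\<And>p. semi_riem_submersion_at (gM p) (gN p) (dF p)"
    and anti: "\<And>p. anti_invariant_at (gM p) (phi p) (dF p)"
  shows "((\<forall>p. dF p (xi p) = 0) \<longrightarrow> m \<le> n \<and> n \<le> 2 * m)
       \<and> (m = n \<longrightarrow> (\<forall>p. dF p (xi p) = 0))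
       \<and> ((\<forall>p. xi p \<in> orth_compl (gM p) {v. dF p v = 0}) \<longrightarrow> m + 1 \<le> n)"
proof -
  have at_p: "anti_invariant_submersion eps (phi p) (xi p) (eta p) (gM p) (gN p) (dF p)" for p
    using eps struct subm anti by unfold_locales auto
  note vertical = anti_invariant_submersion.DIM_bounds_if_xi_vertical[OF at_p]
  note not_vertical = anti_invariant_submersion.DIM_le_if_xi_not_vertical[OF at_p]
  note horizontal = anti_invariant_submersion.xi_horizontal_not_vertical[OF at_p]
  have "m \<le> n \<and> n \<le> 2 * m" if "\<forall>p. dF p (xi p) = 0"
    using vertical[of undefined] that dimM dimN by auto
  moreover have "\<forall>p. dF p (xi p) = 0" if "m = n"
    using not_vertical that dimM dimN by force
  moreover have "m + 1 \<le> n" if "\<forall>p. xi p \<in> orth_compl (gM p) {v. dF p v = 0}"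
    using not_vertical[OF horizontal[of undefined]] that dimM dimN by auto
  ultimately show ?thesis by blast
qed

end
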